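(* For terms $e, e_1, e_2$ of $\mathrm{F}_H$: if $e \longrightarrow e_1$ and $e \longrightarrow e_2$, then $e_1 = e_2$.
   Context: Syntax of the calculus $\mathrm{F}_H$. Fix a set of base types $B$ containing $\mathsf{Bool}$; each base type $B$ has a set $\mathcal{K}_B$ of constants (with $\mathcal{K}_{\mathsf{Bool}}=\{\mathsf{true},\mathsf{false}\}$); $k$ ranges over constants. Fix primitive operations $\mathtt{op}$, each with a denotation $[\![\mathtt{op}]\!]$, a partial function from tuples of constants to constants. Types: $T ::= B \mid \alpha \mid x{:}T_1\to T_2 \mid \forall\alpha.T \mid \{x{:}T \mid e\}$. Values: $v ::= k \mid \lambda x{:}T.e \mid \Lambda\alpha.e \mid \langle T_1\Rightarrow T_2\rangle^{\ell}$ ($\ell$ ranges over blame labels). Terms: $e ::= v \mid x \mid \mathtt{op}(e_1,\dots,e_n) \mid e_1\,e_2 \mid e\,T \mid \langle\!\langle \{x{:}T_1\mid e_1\}, e_2\rangle\!\rangle^{\ell} \mid \langle \{x{:}T_1\mid e_1\}, e_2, v\rangle^{\ell} \mid \Uparrow\ell$. Variables are not values. Substitution is capture-avoiding; $\mathsf{let}\ y{:}T = e_1\ \mathsf{in}\ e_2$ abbreviates $(\lambda y{:}T.e_2)\,e_1$. Reduction $\rightsquigarrow$: $\mathtt{op}(k_1,\dots,k_n)\rightsquigarrow[\![\mathtt{op}]\!](k_1,\dots,k_n)$; $(\lambda x{:}T.e)\,v\rightsquigarrow e[v/x]$; $(\Lambda\alpha.e)\,T\rightsquigarrow e[T/\alpha]$;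 $\langle B\Rightarrow B\rangle^\ell v\rightsquigarrow v$; $\langle x{:}T_{11}\to T_{12}\Rightarrow x{:}T_{21}\to T_{22}\rangle^\ell v\rightsquigarrow \lambda x{:}T_{21}.\,\mathsf{let}\ y{:}T_{11}=\langle T_{21}\Rightarrow T_{11}\rangle^\ell x\ \mathsf{in}\ \langle T_{12}[y/x]\Rightarrow T_{22}\rangle^\ell (v\,y)$ with $y$ fresh; $\langle\forall\alpha.T_1\Rightarrow\forall\alpha.T_2\rangle^\ell v\rightsquigarrow\Lambda\alpha.\langle T_1\Rightarrow T_2\rangle^\ell(v\,\alpha)$; $\langle\{x{:}T_1\mid e_1\}\Rightarrow T_2\rangle^\ell v\rightsquigarrow\langle T_1\Rightarrow T_2\rangle^\ell v$; $\langle T_1\Rightarrow\{x{:}T_2\mid e_2\}\rangle^\ell v\rightsquigarrow\langle\!\langle\{x{:}T_2\mid e_2\},\langle T_1\Rightarrow T_2\rangle^\ell v\rangle\!\rangle^\ell$ provided $T_1$ is not a refinement type; $\langle\!\langle\{x{:}T\mid e\},v\rangle\!\rangle^\ell\rightsquigarrow\langle\{x{:}T\mid e\},e[v/x],v\rangle^\ell$; $\langle\{x{:}T\mid e\},\mathsf{true},v\rangle^\ell\rightsquigarrow v$; $\langle\{x{:}T\mid e\},\mathsf{false},v\rangle^\ell\rightsquigarrow\Uparrow\ell$. Evaluation contexts: $E ::= [\,] \mid \mathtt{op}(v_1,\dots,v_n,E,e_1,\dots,e_m) \mid E\,e \mid v\,E \mid E\,T \mid \langle\!\langle\{x{:}T\mid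 e\},E\rangle\!\rangle^\ell \mid \langle\{x{:}T\mid e\},E,v\rangle^\ell$. Evaluation $\longrightarrow$: $E[e_1]\longrightarrow E[e_2]$ whenever $e_1\rightsquigarrow e_2$; $E[\Uparrow\ell]\longrightarrow\Uparrow\ell$ whenever $E\neq[\,]$. *)

theory Defs
  imports Main
begin

text \<open>Syntax of F_H, with locally bound variables represented by de Bruijn indices
  (two separate index spaces: term variables and type variables).  Hence syntactic
  equality of terms is equality up to alpha-conversion.

  Term-variable binders: the body of Lam; the codomain T2 of TFun T1 T2 (x:T1 -> T2);
  the predicate e of TRef T e ({x:T | e}), of Wait T e e2 and of Act T e e2 v.
  Type-variable binders: the body of TAll and of TLam.\<close>

datatype 'b bty = BBool | BOther 'b

datatype 'k const = CTrue | CFalse | CK 'k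

datatype ('b, 'k, 'o, 'l) ty =
    TBase "'b bty"
  | TVar nat
  | TFun "('b, 'k, 'o, 'l) ty" "('b, 'k, 'o, 'l) ty"
  | TAll "('b, 'k, 'o, 'l) ty"
  | TRef "('b, 'k, 'o, 'l) ty" "('b, 'k, 'o, 'l) tm"
and ('b, 'k, 'o, 'l) tm =
    Const "'k const"
  | Lam "('b, 'k, 'o, 'l) ty" "('b, 'k, 'o, 'l) tm"
  | TLam "('b, 'k, 'o, 'l) tm"
  | Cast "('b, 'k, 'o, 'l) ty" "('b, 'k, 'o, 'l) ty" 'l
  | Var nat
  | Op 'o "('b, 'k, 'o, 'l) tm list"
  | App "('b, 'k, 'o, 'l) tm" "('b, 'k, 'o, 'l) tm"
  | TApp "('b, 'k, 'o, 'l) tm" "('b, 'k, 'o, 'l) ty"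
  | Wait "('b, 'k, 'o, 'l) ty" "('b, 'k, 'o, 'l) tm" "('b, 'k, 'o, 'l) tm" 'l
      \<comment> \<open>Wait T e e2 l  =  the active check  <<{x:T | e}, e2>>^l\<close>
  | Act "('b, 'k, 'o, 'l) ty" "('b, 'k, 'o, 'l) tm" "('b, 'k, 'o, 'l) tm" "('b, 'k, 'o, 'l) tm" 'l
      \<comment> \<open>Act T e e2 v l  =  the active check  <{x:T | e}, e2, v>^l\<close>
  | Blame 'l

fun is_val :: "('b, 'k, 'o, 'l) tm \<Rightarrow> bool" where
  "is_val (Const k) = True"
| "is_val (Lam T e) = True"
| "is_val (TLam e) = True"
| "is_val (Cast T1 T2 l) = True"
| "is_val _ = False"

primrec wf_ty :: "('b, 'k, 'o, 'l) ty \<Rightarrow> bool"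
and wf_tm :: "('b, 'k, 'o, 'l) tm \<Rightarrow> bool" where
  "wf_ty (TBase B) = True"
| "wf_ty (TVar a) = True"
| "wf_ty (TFun T1 T2) = (wf_ty T1 \<and> wf_ty T2)"
| "wf_ty (TAll T) = wf_ty T"
| "wf_ty (TRef T e) = (wf_ty T \<and> wf_tm e)"
| "wf_tm (Const k) = True"
| "wf_tm (Lam T e) = (wf_ty T \<and> wf_tm e)"
| "wf_tm (TLam e) = wf_tm e"
| "wf_tm (Cast T1 T2 l) = (wf_ty T1 \<and> wf_ty T2)"
| "wf_tm (Var x) = True"
| "wf_tm (Op f es) = list_all wf_tm es"
| "wf_tm (App e1 e2) = (wf_tm e1 \<and> wf_tm e2)"
| "wf_tm (TApp e T) = (wf_tm e \<and> wf_ty T)"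
| "wf_tm (Wait T e e2 l) = (wf_ty T \<and> wf_tm e \<and> wf_tm e2)"
| "wf_tm (Act T e e2 v l) = (wf_ty T \<and> wf_tm e \<and> wf_tm e2 \<and> wf_tm v \<and> is_val v)"
| "wf_tm (Blame l) = True"

primrec vshift_ty :: "nat \<Rightarrow> ('b, 'k, 'o, 'l) ty \<Rightarrow> ('b, 'k, 'o, 'l) ty"
and vshift_tm :: "nat \<Rightarrow> ('b, 'k, 'o, 'l) tm \<Rightarrow> ('b, 'k, 'o, 'l) tm" where
  "vshift_ty c (TBase B) = TBase B"
| "vshift_ty c (TVar a) = TVar a"
| "vshift_ty c (TFun T1 T2) = TFun (vshift_ty c T1) (vshift_ty (Suc c) T2)"
| "vshift_ty c (TAll T) = TAll (vshift_ty c T)"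
| "vshift_ty c (TRef T e) = TRef (vshift_ty c T) (vshift_tm (Suc c) e)"
| "vshift_tm c (Const k) = Const k"
| "vshift_tm c (Lam T e) = Lam (vshift_ty c T) (vshift_tm (Suc c) e)"
| "vshift_tm c (TLam e) = TLam (vshift_tm c e)"
| "vshift_tm c (Cast T1 T2 l) = Cast (vshift_ty c T1) (vshift_ty c T2) l"
| "vshift_tm c (Var x) = (if x < c then Var x else Var (Suc x))"
| "vshift_tm c (Op f es) = Op f (map (vshift_tm c) es)"
| "vshift_tm c (App e1 e2) = App (vshift_tm c e1) (vshift_tm c e2)"
| "vshift_tm c (TApp e T) = TApp (vshift_tm c e) (vshift_ty c T)"
| "vshift_tm c (Wait T e e2 l) = Wait (vshift_ty c T) (vshift_tm (Suc c) e) (vshift_tm c e2) l"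
| "vshift_tm c (Act T e e2 v l) =
     Act (vshift_ty c T) (vshift_tm (Suc c) e) (vshift_tm c e2) (vshift_tm c v) l"
| "vshift_tm c (Blame l) = Blame l"

primrec tshift_ty :: "nat \<Rightarrow> ('b, 'k, 'o, 'l) ty \<Rightarrow> ('b, 'k, 'o, 'l) ty"
and tshift_tm :: "nat \<Rightarrow> ('b, 'k, 'o, 'l) tm \<Rightarrow> ('b, 'k, 'o, 'l) tm" where
  "tshift_ty c (TBase B) = TBase B"
| "tshift_ty c (TVar a) = (if a < c then TVar a else TVar (Suc a))"
| "tshift_ty c (TFun T1 T2) = TFun (tshift_ty c T1) (tshift_ty c T2)"
| "tshift_ty c (TAll T) = TAll (tshift_ty (Suc c) T)"
| "tshift_ty c (TRef T e) = TRef (tshift_ty c T) (tshift_tm c e)"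
| "tshift_tm c (Const k) = Const k"
| "tshift_tm c (Lam T e) = Lam (tshift_ty c T) (tshift_tm c e)"
| "tshift_tm c (TLam e) = TLam (tshift_tm (Suc c) e)"
| "tshift_tm c (Cast T1 T2 l) = Cast (tshift_ty c T1) (tshift_ty c T2) l"
| "tshift_tm c (Var x) = Var x"
| "tshift_tm c (Op f es) = Op f (map (tshift_tm c) es)"
| "tshift_tm c (App e1 e2) = App (tshift_tm c e1) (tshift_tm c e2)"
| "tshift_tm c (TApp e T) = TApp (tshift_tm c e) (tshift_ty c T)"
| "tshift_tm c (Wait T e e2 l) = Wait (tshift_ty c T) (tshift_tm c e) (tshift_tm c e2) l"
| "tshift_tm c (Act T e e2 v l) =
     Act (tshift_ty c T) (tshift_tm c e) (tshift_tm c e2) (tshift_tm c v) l"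
| "tshift_tm c (Blame l) = Blame l"

text \<open>Capture-avoiding substitution of the term s for term variable j
  (indices above j are decremented, since the binder of j disappears).\<close>
primrec vsubst_ty :: "nat \<Rightarrow> ('b, 'k, 'o, 'l) tm \<Rightarrow> ('b, 'k, 'o, 'l) ty \<Rightarrow> ('b, 'k, 'o, 'l) ty"
and vsubst_tm :: "nat \<Rightarrow> ('b, 'k, 'o, 'l) tm \<Rightarrow> ('b, 'k, 'o, 'l) tm \<Rightarrow> ('b, 'k, 'o, 'l) tm" where
  "vsubst_ty j s (TBase B) = TBase B"
| "vsubst_ty j s (TVar a) = TVar a"
| "vsubst_ty j s (TFun T1 T2) = TFun (vsubst_ty j s T1) (vsubst_ty (Suc j) (vshift_tm 0 s) T2)"
| "vsubst_ty j s (TAll T) = TAll (vsubst_ty j (tshift_tm 0 s) T)"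
| "vsubst_ty j s (TRef T e) = TRef (vsubst_ty j s T) (vsubst_tm (Suc j) (vshift_tm 0 s) e)"
| "vsubst_tm j s (Const k) = Const k"
| "vsubst_tm j s (Lam T e) = Lam (vsubst_ty j s T) (vsubst_tm (Suc j) (vshift_tm 0 s) e)"
| "vsubst_tm j s (TLam e) = TLam (vsubst_tm j (tshift_tm 0 s) e)"
| "vsubst_tm j s (Cast T1 T2 l) = Cast (vsubst_ty j s T1) (vsubst_ty j s T2) l"
| "vsubst_tm j s (Var x) = (if x = j then s else if x < j then Var x else Var (x - 1))"
| "vsubst_tm j s (Op f es) = Op f (map (vsubst_tm j s) es)"
| "vsubst_tm j s (App e1 e2) = App (vsubst_tm j s e1) (vsubst_tm j s e2)"
| "vsubst_tm j s (TApp e T) = TApp (vsubst_tm j s e) (vsubst_ty j s T)"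
| "vsubst_tm j s (Wait T e e2 l) =
     Wait (vsubst_ty j s T) (vsubst_tm (Suc j) (vshift_tm 0 s) e) (vsubst_tm j s e2) l"
| "vsubst_tm j s (Act T e e2 v l) =
     Act (vsubst_ty j s T) (vsubst_tm (Suc j) (vshift_tm 0 s) e) (vsubst_tm j s e2)
         (vsubst_tm j s v) l"
| "vsubst_tm j s (Blame l) = Blame l"

primrec tsubst_ty :: "nat \<Rightarrow> ('b, 'k, 'o, 'l) ty \<Rightarrow> ('b, 'k, 'o, 'l) ty \<Rightarrow> ('b, 'k, 'o, 'l) ty"
and tsubst_tm :: "nat \<Rightarrow> ('b, 'k, 'o, 'l) ty \<Rightarrow> ('b, 'k, 'o, 'l) tm \<Rightarrow> ('b, 'k, 'o, 'l) tm" where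
  "tsubst_ty j S (TBase B) = TBase B"
| "tsubst_ty j S (TVar a) = (if a = j then S else if a < j then TVar a else TVar (a - 1))"
| "tsubst_ty j S (TFun T1 T2) = TFun (tsubst_ty j S T1) (tsubst_ty j (vshift_ty 0 S) T2)"
| "tsubst_ty j S (TAll T) = TAll (tsubst_ty (Suc j) (tshift_ty 0 S) T)"
| "tsubst_ty j S (TRef T e) = TRef (tsubst_ty j S T) (tsubst_tm j (vshift_ty 0 S) e)"
| "tsubst_tm j S (Const k) = Const k"
| "tsubst_tm j S (Lam T e) = Lam (tsubst_ty j S T) (tsubst_tm j (vshift_ty 0 S) e)"
| "tsubst_tm j S (TLam e) = TLam (tsubst_tm (Suc j) (tshift_ty 0 S) e)"
| "tsubst_tm j S (Cast T1 T2 l) = Cast (tsubst_ty j S T1) (tsubst_ty j S T2) l"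
| "tsubst_tm j S (Var x) = Var x"
| "tsubst_tm j S (Op f es) = Op f (map (tsubst_tm j S) es)"
| "tsubst_tm j S (App e1 e2) = App (tsubst_tm j S e1) (tsubst_tm j S e2)"
| "tsubst_tm j S (TApp e T) = TApp (tsubst_tm j S e) (tsubst_ty j S T)"
| "tsubst_tm j S (Wait T e e2 l) =
     Wait (tsubst_ty j S T) (tsubst_tm j (vshift_ty 0 S) e) (tsubst_tm j S e2) l"
| "tsubst_tm j S (Act T e e2 v l) =
     Act (tsubst_ty j S T) (tsubst_tm j (vshift_ty 0 S) e) (tsubst_tm j S e2) (tsubst_tm j S v) l"
| "tsubst_tm j S (Blame l) = Blame l"

fun is_ref :: "('b, 'k, 'o, 'l) ty \<Rightarrow> bool" where
  "is_ref (TRef T e) = True"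
| "is_ref _ = False"

inductive red :: "('o \<Rightarrow> 'k const list \<Rightarrow> 'k const option)
    \<Rightarrow> ('b, 'k, 'o, 'l) tm \<Rightarrow> ('b, 'k, 'o, 'l) tm \<Rightarrow> bool"
  for den :: "'o \<Rightarrow> 'k const list \<Rightarrow> 'k const option" where
  r_op: "den f ks = Some k \<Longrightarrow> red den (Op f (map Const ks)) (Const k)"
| r_beta: "is_val v \<Longrightarrow> red den (App (Lam T e) v) (vsubst_tm 0 v e)"
| r_tbeta: "red den (TApp (TLam e) T) (tsubst_tm 0 T e)"
| r_base: "is_val v \<Longrightarrow> red den (App (Cast (TBase B) (TBase B) l) v) v"
| r_fun: "is_val v \<Longrightarrow>
    red den (App (Cast (TFun T11 T12) (TFun T21 T22) l) v)
      (Lam T21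
        (App (Lam (vshift_ty 0 T11)
               (App (Cast (vshift_ty 1 T12) (vshift_ty 0 T22) l)
                    (App (vshift_tm 0 (vshift_tm 0 v)) (Var 0))))
             (App (Cast (vshift_ty 0 T21) (vshift_ty 0 T11) l) (Var 0))))"
| r_forall: "is_val v \<Longrightarrow>
    red den (App (Cast (TAll T1) (TAll T2) l) v)
      (TLam (App (Cast T1 T2 l) (TApp (tshift_tm 0 v) (TVar 0))))"
| r_forget: "is_val v \<Longrightarrow> red den (App (Cast (TRef T1 e1) T2 l) v) (App (Cast T1 T2 l) v)"
| r_precheck: "is_val v \<Longrightarrow> \<not> is_ref T1 \<Longrightarrow>
    red den (App (Cast T1 (TRef T2 e2) l) v) (Wait T2 e2 (App (Cast T1 T2 l) v) l)"
| r_check: "is_val v \<Longrightarrow> red den (Wait T e v l) (Act T e (vsubst_tm 0 v e) v l)"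
| r_ok: "red den (Act T e (Const CTrue) v l) v"
| r_fail: "red den (Act T e (Const CFalse) v l) (Blame l)"

datatype ('b, 'k, 'o, 'l) ctx =
    Hole
  | COp 'o "('b, 'k, 'o, 'l) tm list" "('b, 'k, 'o, 'l) ctx" "('b, 'k, 'o, 'l) tm list"
  | CAppL "('b, 'k, 'o, 'l) ctx" "('b, 'k, 'o, 'l) tm"
  | CAppR "('b, 'k, 'o, 'l) tm" "('b, 'k, 'o, 'l) ctx"
  | CTApp "('b, 'k, 'o, 'l) ctx" "('b, 'k, 'o, 'l) ty"
  | CWait "('b, 'k, 'o, 'l) ty" "('b, 'k, 'o, 'l) tm" "('b, 'k, 'o, 'l) ctx" 'l
  | CAct "('b, 'k, 'o, 'l) ty" "('b, 'k, 'o, 'l) tm" "('b, 'k, 'o, 'l) ctx" "('b, 'k, 'o, 'l) tm" 'l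

primrec ectx :: "('b, 'k, 'o, 'l) ctx \<Rightarrow> bool" where
  "ectx Hole = True"
| "ectx (COp f vs E es) = ((\<forall>v\<in>set vs. is_val v) \<and> ectx E)"
| "ectx (CAppL E e) = ectx E"
| "ectx (CAppR v E) = (is_val v \<and> ectx E)"
| "ectx (CTApp E T) = ectx E"
| "ectx (CWait T e E l) = ectx E"
| "ectx (CAct T e E v l) = (is_val v \<and> ectx E)"

primrec fill :: "('b, 'k, 'o, 'l) ctx \<Rightarrow> ('b, 'k, 'o, 'l) tm \<Rightarrow> ('b, 'k, 'o, 'l) tm" where
  "fill Hole t = t"
| "fill (COp f vs E es) t = Op f (vs @ [fill E t] @ es)"
| "fill (CAppL E e) t = App (fill E t) e"
| "fill (CAppR v E) t = App v (fill E t)"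
| "fill (CTApp E T) t = TApp (fill E t) T"
| "fill (CWait T e E l) t = Wait T e (fill E t) l"
| "fill (CAct T e E v l) t = Act T e (fill E t) v l"

inductive step :: "('o \<Rightarrow> 'k const list \<Rightarrow> 'k const option)
    \<Rightarrow> ('b, 'k, 'o, 'l) tm \<Rightarrow> ('b, 'k, 'o, 'l) tm \<Rightarrow> bool"
  for den :: "'o \<Rightarrow> 'k const list \<Rightarrow> 'k const option" where
  s_ctx: "ectx E \<Longrightarrow> red den e1 e2 \<Longrightarrow> step den (fill E e1) (fill E e2)"
| s_blame: "ectx E \<Longrightarrow> E \<noteq> Hole \<Longrightarrow> step den (fill E (Blame l)) (Blame l)"

end

theory Submission
  imports Defs
begin

text \<open>A term decomposes in at most one way as E[r] with E an evaluation context and r either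
  a primitive redex or blame: the rules of primitive reduction only ever look at values in
  the positions where a context may place its hole, and filling a non-hole context never
  yields a value, so a redex cannot sit strictly inside another one.  Primitive reduction
  is itself deterministic because its left-hand sides do not overlap and the denotations
  of operations are functions.\<close>

definition redex :: "('o \<Rightarrow> 'k const list \<Rightarrow> 'k const option) \<Rightarrow> ('b, 'k, 'o, 'l) tm \<Rightarrow> bool" where
  "redex den t \<longleftrightarrow> (\<exists>r. red den t r) \<or> (\<exists>l. t = Blame l)"

lemma redex_not_val: "redex den t \<Longrightarrow> \<not> is_val t"
  unfolding redex_def by (auto elim: red.cases)

lemma is_val_fill [simp]: "is_val (fill E t) \<longleftrightarrow> E = Hole \<and> is_val t"
  by (cases E) auto

lemma fill_eq_val: "fill E t = v \<Longrightarrow> is_val v \<Longrightarrow> E = Hole \<and> t = v"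
  by auto

lemma red_fill_val: "red den (fill E t) r \<Longrightarrow> E \<noteq> Hole \<Longrightarrow> is_val t"
  by (cases E)
    (auto elim!: red.cases dest!: fill_eq_val simp: append_eq_map_conv Cons_eq_map_conv)

lemma fill_eq_Blame: "fill E t = Blame l \<Longrightarrow> E = Hole"
  by (cases E) auto

lemma redex_fill_Hole: "redex den (fill E t) \<Longrightarrow> \<not> is_val t \<Longrightarrow> E = Hole"
  unfolding redex_def by (metis fill_eq_Blame red_fill_val)

lemma fill_redex_Hole_iff:
  "redex den t1 \<Longrightarrow> redex den t2 \<Longrightarrow> fill E1 t1 = fill E2 t2 \<Longrightarrow> E1 = Hole \<longleftrightarrow> E2 = Hole"
  by (metis fill.simps(1) redex_fill_Hole redex_not_val)

lemma split_list_first_prop_unique: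
  assumes "\<forall>x\<in>set xs. P x" "\<forall>y\<in>set ys. P y" "\<not> P a" "\<not> P b"
    and "xs @ a # us = ys @ b # vs"
  shows "xs = ys \<and> a = b \<and> us = vs"
  using assms
proof (induction xs arbitrary: ys)
  case Nil
  then show ?case by (cases ys) auto
next
  case (Cons x xs)
  then show ?case by (cases ys) auto
qed

lemma fill_redex_unique:
  "ectx E1 \<Longrightarrow> ectx E2 \<Longrightarrow> redex den t1 \<Longrightarrow> redex den t2 \<Longrightarrow> fill E1 t1 = fill E2 t2
   \<Longrightarrow> E1 = E2 \<and> t1 = t2"
proof (induction E1 arbitrary: E2)
  case Hole
  with fill_redex_Hole_iff[OF Hole.prems(3-5)] show ?case by simp
next
  case (COp f vs E es)
  with fill_redex_Hole_iff[OF COp.prems(3-5)] obtain vs' E' es'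
    where E2: "E2 = COp f vs' E' es'" and args: "vs @ fill E t1 # es = vs' @ fill E' t2 # es'"
    by (cases E2) auto
  have "vs = vs' \<and> fill E t1 = fill E' t2 \<and> es = es'"
    using COp.prems E2
    by (intro split_list_first_prop_unique[where P = is_val, OF _ _ _ _ args])
      (auto simp: redex_not_val)
  with COp.IH COp.prems E2 show ?case by auto
next
  case (CAppL E e)
  with fill_redex_Hole_iff[OF CAppL.prems(3-5)] show ?case by (cases E2) (auto simp: redex_not_val)
next
  case (CAppR v E)
  with fill_redex_Hole_iff[OF CAppR.prems(3-5)] show ?case by (cases E2) (auto simp: redex_not_val)
next
  case (CTApp E T)
  with fill_redex_Hole_iff[OF CTApp.prems(3-5)] show ?case by (cases E2) auto
next
  case (CWait T e E l)
  with fill_redex_Hole_iff[OF CWait.prems(3-5)] show ?case by (cases E2) auto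
next
  case (CAct T e E v l)
  with fill_redex_Hole_iff[OF CAct.prems(3-5)] show ?case by (cases E2) auto
qed

lemma red_deterministic: "red den e e1 \<Longrightarrow> red den e e2 \<Longrightarrow> e1 = e2"
proof (induction rule: red.induct)
  case (r_op f ks k)
  from r_op.prems show ?case
  proof cases
    case (r_op ks')
    then have "ks = ks'" by (simp add: inj_map_eq_map inj_def)
    with r_op \<open>den f ks = Some k\<close> show ?thesis by simp
  qed
qed (auto elim: red.cases)
lemma red_redex: "red den t r \<Longrightarrow> redex den t"
  unfolding redex_def by blast

lemma Blame_redex: "redex den (Blame l)"
  unfolding redex_def by blast

lemma Blame_irreducible: "\<not> red den (Blame l) r"
  by (auto elim: red.cases)

lemma step_deterministic:
  assumes "step den e e1" and "step den e e2"
  shows "e1 = e2"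
  using assms(1)
proof cases
  case (s_ctx E t r)
  from assms(2) show ?thesis
  proof cases
    case (s_ctx E' t' r')
    have "E = E' \<and> t = t'"
      using \<open>e = fill E t\<close> \<open>e = fill E' t'\<close>
      by (intro fill_redex_unique[OF \<open>ectx E\<close> \<open>ectx E'\<close>
            red_redex[OF \<open>red den t r\<close>] red_redex[OF \<open>red den t' r'\<close>]]) simp
    then show ?thesis
      using \<open>red den t r\<close> \<open>red den t' r'\<close> \<open>e1 = fill E r\<close> \<open>e2 = fill E' r'\<close>
      by (auto dest: red_deterministic)
  next
    case (s_blame E' l)
    have "t = Blame l"
      using \<open>e = fill E t\<close> \<open>e = fill E' (Blame l)\<close>
      by (intro fill_redex_unique[OF \<open>ectx E\<close> \<open>ectx E'\<close>
            red_redex[OF \<open>red den t r\<close>] Blame_redex, THEN conjunct2]) simp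
    with \<open>red den t r\<close> show ?thesis
      by (simp add: Blame_irreducible)
  qed
next
  case (s_blame E l)
  from assms(2) show ?thesis
  proof cases
    case (s_ctx E' t' r')
    have "t' = Blame l"
      using \<open>e = fill E (Blame l)\<close> \<open>e = fill E' t'\<close>
      by (intro fill_redex_unique[OF \<open>ectx E'\<close> \<open>ectx E\<close>
            red_redex[OF \<open>red den t' r'\<close>] Blame_redex, THEN conjunct2]) simp
    with \<open>red den t' r'\<close> show ?thesis
      by (simp add: Blame_irreducible)
  next
    case (s_blame E' l')
    have "fill E (Blame l) = fill E' (Blame l')"
      using \<open>e = fill E (Blame l)\<close> \<open>e = fill E' (Blame l')\<close> by simp
    then have "Blame l = Blame l'"
      using fill_redex_unique[OF \<open>ectx E\<close> \<open>ectx E'\<close> Blame_redex Blame_redex] by blast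
    with \<open>e1 = Blame l\<close> \<open>e2 = Blame l'\<close> show ?thesis by simp
  qed
qed

theorem mainTheorem2:
  fixes den :: "'o \<Rightarrow> 'k const list \<Rightarrow> 'k const option"
    and e e1 e2 :: "('b, 'k, 'o, 'l) tm"
  assumes "wf_tm e"
    and "step den e e1"
    and "step den e e2"
  shows "e1 = e2"
  using assms(2,3) by (rule step_deterministic)

end
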